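(* Let $F_1,F_2,F$ be full-dimensional tree topologies on $[N]$ with $F\in C(F_1,F_2)$. Then every equivalence class $C$ of 2-element subsets of $[N]$ with respect to $=_F$ is contained in a single equivalence class with respect to $=_{F_1}$ or in a single equivalence class with respect to $=_{F_2}$.
   Context: A tree topology $F$ on $[N]$ is a collection of subsets $S\subseteq[N]$ (clades) with $2\le|S|\le N-1$, pairwise either strictly nested or disjoint; it is full dimensional if $|F|=N-2$. For a 2-element subset $p\subseteq[N]$, $\mathrm{cl}_F(p)$ is the intersection of all $S\in F$ containing $p$ (or $[N]$ if none), and $p=_Fq$ iff $\mathrm{cl}_F(p)=\mathrm{cl}_F(q)$. $ut(F)\subseteq\mathbb{R}^{\binom N2}$ is the set of tree metric vectors ($w_{\{i,j\}}=$ path length between leaves $i,j$) of equidistant rooted phylogenetic trees (positive edge lengths, all leaves equidistant from the root) with tree topology $F$ (the set of leaf sets below internal edges). $C(F_1,F_2)$ is the set of tree topologies $F$ for which there exist $w^1\in ut(F_1)$ and $w^2\in ut(F_2)$ with $w^1\boxplus w^2\in ut(F)$, where $(w^1\boxplus w^2)_p=\max(w^1_p,w^2_p)$. *)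

theory Defs
  imports Complex_Main
begin

definition pairs :: "nat \<Rightarrow> nat set set" where
  "pairs N = {p. p \<subseteq> {1..N} \<and> card p = 2}"

definition tree_topology :: "nat \<Rightarrow> nat set set \<Rightarrow> bool" where
  "tree_topology N F \<longleftrightarrow>
     (\<forall>S\<in>F. S \<subseteq> {1..N} \<and> 2 \<le> card S \<and> card S \<le> N - 1) \<and>
     (\<forall>S\<in>F. \<forall>T\<in>F. S \<noteq> T \<longrightarrow> S \<subset> T \<or> T \<subset> S \<or> S \<inter> T = {})"

definition full_dimensional :: "nat \<Rightarrow> nat set set \<Rightarrow> bool" where
  "full_dimensional N F \<longleftrightarrow> card F = N - 2"

definition cl :: "nat \<Rightarrow> nat set set \<Rightarrow> nat set \<Rightarrow> nat set" where
  "cl N F p = (if \<exists>S\<in>F. p \<subseteq> S then \<Inter>{S\<in>F. p \<subseteq> S} else {1..N})"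

definition eq_class :: "nat \<Rightarrow> nat set set \<Rightarrow> nat set \<Rightarrow> nat set set" where
  "eq_class N F p = {q \<in> pairs N. cl N F q = cl N F p}"

text \<open>ut(F): tree metrics of equidistant rooted phylogenetic trees with topology F.
  Such a tree is given by its hierarchy of nodes F \<union> {[N]} (plus leaves at height 0)
  and node heights h (distance to the leaves below); the edge lengths are
  differences of heights, which are positive iff h is positive and strictly
  increasing along strict inclusion. The path length between leaves i and j is
  twice the height of their lowest common ancestor cl_F {i,j}.
  Vectors in R^(N choose 2) are functions on sets, vanishing off the 2-subsets.\<close>
definition ut :: "nat \<Rightarrow> nat set set \<Rightarrow> (nat set \<Rightarrow> real) set" where
  "ut N F = {w. \<exists>h :: nat set \<Rightarrow> real.
      (\<forall>S\<in>insert {1..N} F. 0 < h S) \<and>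
      (\<forall>S\<in>insert {1..N} F. \<forall>T\<in>insert {1..N} F. S \<subset> T \<longrightarrow> h S < h T) \<and>
      w = (\<lambda>p. if p \<in> pairs N then 2 * h (cl N F p) else 0)}"

definition tropical_sum :: "(nat set \<Rightarrow> real) \<Rightarrow> (nat set \<Rightarrow> real) \<Rightarrow> (nat set \<Rightarrow> real)" where
  "tropical_sum w1 w2 = (\<lambda>p. max (w1 p) (w2 p))"

definition Cset :: "nat \<Rightarrow> nat set set \<Rightarrow> nat set set \<Rightarrow> nat set set set" where
  "Cset N F1 F2 = {F. tree_topology N F \<and>
      (\<exists>w1\<in>ut N F1. \<exists>w2\<in>ut N F2. tropical_sum w1 w2 \<in> ut N F)}"

end

theory Submission
  imports Defs
begin

text \<open>Write p = {a, b}, S = cl_F(p), and let w = w1 \<boxplus> w2 be the witness in ut(F). Read as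
  distances between leaves, w, w1, w2 are ultrametrics with w = max w1 w2, and the =_F-class of p
  consists of the pairs {x, y} \<subseteq> S with w_xy = c := w_p. Because F is full dimensional the tree is
  binary: a leaf triple with pairwise equal distances would give a trifurcation, and splitting
  it would produce a laminar family on [N] with more than N - 1 members. So every top pair {x, y}
  has one end close to a and the other close to b. If w1 < c on one top pair, the ultrametric
  inequality gives w1 < c on all of them, hence w2 = c on all of them. Finally, if w_k = c on all
  top pairs, any two of them are linked by a chain of top pairs sharing a leaf, and two clades
  of F_k of equal height that share a leaf coincide; so the class of p lies in a single
  =_{F_k}-class.\<close>

section \<open>Laminar families\<close>

definition laminar :: "'a set set \<Rightarrow> bool" where
  "laminar G \<longleftrightarrow> (\<forall>S\<in>G. \<forall>T\<in>G. S \<noteq> T \<longrightarrow> S \<subset> T \<or> T \<subset> S \<or> S \<inter> T = {})"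

lemma laminar_insert_iff:
  "laminar (insert U G) \<longleftrightarrow> laminar G \<and> (\<forall>R\<in>G. R \<noteq> U \<longrightarrow> R \<subset> U \<or> U \<subset> R \<or> R \<inter> U = {})"
  unfolding laminar_def by blast

lemma laminar_subset: "laminar G \<Longrightarrow> H \<subseteq> G \<Longrightarrow> laminar H"
  unfolding laminar_def by blast

lemma laminar_comparable:
  "laminar G \<Longrightarrow> S \<in> G \<Longrightarrow> T \<in> G \<Longrightarrow> S \<inter> T \<noteq> {} \<Longrightarrow> S \<subseteq> T \<or> T \<subseteq> S"
  unfolding laminar_def by blast

lemma laminar_image_Diff:
  assumes "laminar G"
  shows "laminar ((\<lambda>R. R - {v}) ` G)"
  unfolding laminar_def
proof (intro ballI impI)
  fix A B assume "A \<in> (\<lambda>R. R - {v}) ` G" "B \<in> (\<lambda>R. R - {v}) ` G" "A \<noteq> B"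
  then obtain R1 R2 where "R1 \<in> G" "R2 \<in> G" "R1 \<noteq> R2" "A = R1 - {v}" "B = R2 - {v}" by auto
  with assms \<open>A \<noteq> B\<close> show "A \<subset> B \<or> B \<subset> A \<or> A \<inter> B = {}"
    unfolding laminar_def by blast
qed

lemma laminar_minimal_subset:
  assumes "laminar G" "T \<in> G" "\<forall>R\<in>G. \<not> R \<subset> T" "R \<in> G" "T \<inter> R \<noteq> {}"
  shows "T \<subseteq> R"
proof -
  have "T = R \<or> T \<subset> R \<or> R \<subset> T \<or> T \<inter> R = {}"
    using assms(1,2,4) unfolding laminar_def by blast
  then show ?thesis using assms(3-5) by blast
qed

lemma inj_on_Diff_minimal:
  assumes "laminar G" "T \<in> G" "\<forall>R\<in>G. \<not> R \<subset> T" "v \<in> T" "T - {v} \<noteq> {}"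
  shows "inj_on (\<lambda>R. R - {v}) G"
proof (rule inj_onI)
  have False if "R1 \<in> G" "R2 \<in> G" "v \<in> R1" "v \<notin> R2" "R1 - {v} = R2 - {v}" for R1 R2
  proof -
    have "T \<subseteq> R1" using laminar_minimal_subset[OF assms(1-3) that(1)] assms(4) that(3) by blast
    then have "T \<subseteq> R2"
      using laminar_minimal_subset[OF assms(1-3) that(2)] assms(5) that(5) by blast
    then show False using assms(4) that(4) by blast
  qed
  then show "R1 = R2" if "R1 \<in> G" "R2 \<in> G" "R1 - {v} = R2 - {v}" for R1 R2
    using that by blast
qed

lemma two_le_card_Diff_minimal_point:
  assumes "laminar G" "\<forall>R\<in>G. finite R \<and> 2 \<le> card R"
    and "T \<in> G" "\<forall>R\<in>G. \<not> R \<subset> T" "v \<in> T" "R \<in> G" "R \<noteq> T"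
  shows "2 \<le> card (R - {v})"
proof (cases "v \<in> R")
  case True
  then have "T \<subset> R" using laminar_minimal_subset[OF assms(1,3,4,6)] assms(5,7) by blast
  then have "card T < card R" using psubset_card_mono assms(2,6) by blast
  moreover have "2 \<le> card T" using assms(2,3) by blast
  ultimately show ?thesis using assms(2,6) True by simp
qed (simp add: assms(2,6))

lemma card_laminar_le:
  assumes "finite X" "laminar G" "\<forall>R\<in>G. R \<subseteq> X \<and> 2 \<le> card R"
  shows "card G \<le> card X - 1"
  using assms
proof (induction "card X" arbitrary: X G rule: less_induct)
  case less
  show ?case
  proof (cases "G = {}")
    case False
    have "finite G" using less.prems finite_subset[of G "Pow X"] by auto
    then obtain T where "T \<in> G" "\<forall>R\<in>G. R \<subseteq> T \<longrightarrow> T = R"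
      using finite_has_minimal[OF _ False] by blast
    then have T: "T \<in> G" "\<forall>R\<in>G. \<not> R \<subset> T" by auto
    have "T \<subseteq> X" "2 \<le> card T" using T(1) less.prems by auto
    then obtain v where v: "v \<in> T" "T - {v} \<noteq> {}"
      using card_le_Suc0_iff_eq[of T] by (cases "finite T") auto
    have members: "\<forall>R\<in>G. finite R \<and> 2 \<le> card R"
      using less.prems by (auto intro: finite_subset)
    define G' where "G' = (\<lambda>R. R - {v}) ` (G - {T})"
    have inj: "inj_on (\<lambda>R. R - {v}) (G - {T})"
      using inj_on_Diff_minimal[OF less.prems(2) T v] inj_on_subset by blast
    have "laminar G'"
      unfolding G'_def using laminar_image_Diff laminar_subset[OF less.prems(2), of "G - {T}"] by simp
    moreover have "\<forall>R'\<in>G'. R' \<subseteq> X - {v} \<and> 2 \<le> card R'"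
      using two_le_card_Diff_minimal_point[OF less.prems(2) members T v(1)] less.prems(3)
      unfolding G'_def by blast
    moreover have "card (X - {v}) < card X"
      using card_Diff1_less[OF less.prems(1)] v(1) \<open>T \<subseteq> X\<close> by blast
    ultimately have "card G' \<le> card (X - {v}) - 1" using less.hyps less.prems(1) by simp
    moreover have "card G' = card G - 1"
      unfolding G'_def using card_image[OF inj] T(1) \<open>finite G\<close> by simp
    moreover have "card G \<noteq> 0" using \<open>finite G\<close> False by simp
    moreover have "card (X - {v}) = card X - 1"
      using v(1) \<open>T \<subseteq> X\<close> by (simp add: card_Diff_singleton subsetD)
    moreover have "2 \<le> card X"
      using card_mono[OF less.prems(1) \<open>T \<subseteq> X\<close>] \<open>2 \<le> card T\<close> by simp
    ultimately show ?thesis by linarith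
  qed simp
qed

lemma laminar_insert_remove_branch:
  assumes "laminar G" "S \<in> G" "x \<in> S"
  shows "laminar (insert (S - insert x (\<Union>{R\<in>G. x \<in> R \<and> R \<subset> S})) G)"
proof -
  define C where "C = insert x (\<Union>{R\<in>G. x \<in> R \<and> R \<subset> S})"
  have inside: "R \<subseteq> C \<or> R \<inter> C = {}" if "R \<in> G" "R \<subset> S" for R
  proof (cases "\<exists>R'\<in>G. x \<in> R' \<and> R' \<subset> S \<and> R \<inter> R' \<noteq> {}")
    case True
    then obtain R' where R': "R' \<in> G" "x \<in> R'" "R' \<subset> S" "R \<inter> R' \<noteq> {}" by blast
    then have "R \<subseteq> R' \<or> R' \<subseteq> R" using laminar_comparable[OF assms(1) that(1)] by blast
    then have "R \<subseteq> R' \<or> x \<in> R" using R'(2) by blast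
    then show ?thesis using R' that unfolding C_def by blast
  next
    case False
    then have "x \<notin> R" using that by blast
    with False show ?thesis unfolding C_def by blast
  qed
  have "\<forall>R\<in>G. R \<noteq> S - C \<longrightarrow> R \<subset> S - C \<or> S - C \<subset> R \<or> R \<inter> (S - C) = {}"
  proof (intro ballI impI)
    fix R assume R: "R \<in> G" "R \<noteq> S - C"
    have "x \<in> C" unfolding C_def by simp
    have "R = S \<or> R \<subset> S \<or> S \<subset> R \<or> R \<inter> S = {}"
      using assms(1,2) R(1) unfolding laminar_def by blast
    then consider "S \<subseteq> R" | "R \<subseteq> C" | "R \<inter> C = {}" "R \<subseteq> S" | "R \<inter> S = {}"
      using inside[OF R(1)] by blast
    then show "R \<subset> S - C \<or> S - C \<subset> R \<or> R \<inter> (S - C) = {}"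
      using \<open>x \<in> C\<close> assms(3) R(2) by cases blast+
  qed
  with assms(1) show ?thesis unfolding C_def[symmetric] laminar_insert_iff by blast
qed

text \<open>If S has three leaves that are pairwise separated only at S, then S minus the branch
  through x can be added to G, so the bound of card_laminar_le improves by one.\<close>

lemma card_laminar_three_branches:
  assumes "finite X" "laminar G" "\<forall>R\<in>G. R \<subseteq> X \<and> 2 \<le> card R"
    and "S \<in> G" "a \<in> S" "b \<in> S" "x \<in> S" "a \<noteq> b" "a \<noteq> x" "b \<noteq> x"
    and "\<forall>R\<in>G. a \<in> R \<and> b \<in> R \<or> a \<in> R \<and> x \<in> R \<or> b \<in> R \<and> x \<in> R \<longrightarrow> S \<subseteq> R"
  shows "card G \<le> card X - 2"
proof -
  define U where "U = S - insert x (\<Union>{R\<in>G. x \<in> R \<and> R \<subset> S})"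
  have "a \<notin> R" "b \<notin> R" if "R \<in> G" "x \<in> R" "R \<subset> S" for R
    using assms(11)[rule_format, OF that(1)] that(2,3) by blast+
  then have ab: "a \<in> U" "b \<in> U" using assms(5,6,9,10) unfolding U_def by blast+
  have "U \<notin> G"
  proof
    assume "U \<in> G"
    then have "S \<subseteq> U" using assms(11) ab by blast
    moreover have "x \<notin> U" unfolding U_def by blast
    ultimately show False using assms(7) by blast
  qed
  have "finite G" using assms(1,3) finite_subset[of G "Pow X"] by auto
  have "U \<subseteq> X" using assms(3,4) unfolding U_def by blast
  then have "2 \<le> card U"
    using ab assms(1,8) card_mono[of U "{a, b}"] finite_subset by fastforce
  then have "card (insert U G) \<le> card X - 1"
    using card_laminar_le[OF assms(1)] laminar_insert_remove_branch[OF assms(2,4,7)]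
      assms(3) \<open>U \<subseteq> X\<close> unfolding U_def by blast
  then show ?thesis using \<open>U \<notin> G\<close> \<open>finite G\<close> by simp
qed

section \<open>Ultrametrics\<close>

definition ultrametric_on :: "'a set \<Rightarrow> ('a \<Rightarrow> 'a \<Rightarrow> real) \<Rightarrow> bool" where
  "ultrametric_on S d \<longleftrightarrow> (\<forall>x\<in>S. d x x = 0) \<and> (\<forall>x\<in>S. \<forall>y\<in>S. d x y = d y x) \<and>
     (\<forall>x\<in>S. \<forall>y\<in>S. \<forall>z\<in>S. d x z \<le> max (d x y) (d y z))"

text \<open>For the leaf distances of an equidistant tree this says that the tree is binary.\<close>

definition equilateral_free_on :: "'a set \<Rightarrow> ('a \<Rightarrow> 'a \<Rightarrow> real) \<Rightarrow> bool" where
  "equilateral_free_on S d \<longleftrightarrow>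
     (\<forall>x\<in>S. \<forall>y\<in>S. \<forall>z\<in>S. x \<noteq> y \<longrightarrow> x \<noteq> z \<longrightarrow> y \<noteq> z \<longrightarrow> \<not> (d x y = d x z \<and> d x y = d y z))"

lemma ultrametric_on_subset: "ultrametric_on S d \<Longrightarrow> T \<subseteq> S \<Longrightarrow> ultrametric_on T d"
  unfolding ultrametric_on_def by blast

lemma equilateral_free_on_subset: "equilateral_free_on S d \<Longrightarrow> T \<subseteq> S \<Longrightarrow> equilateral_free_on T d"
  unfolding equilateral_free_on_def by blast

lemma ultrametric_on_max:
  assumes "ultrametric_on S d1" "ultrametric_on S d2"
  shows "ultrametric_on S (\<lambda>x y. max (d1 x y) (d2 x y))"
  unfolding ultrametric_on_def
proof (intro conjI ballI)
  fix x y z assume "x \<in> S" "y \<in> S" "z \<in> S"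
  then have "d1 x z \<le> max (d1 x y) (d1 y z)" "d2 x z \<le> max (d2 x y) (d2 y z)"
    using assms unfolding ultrametric_on_def by blast+
  then show "max (d1 x z) (d2 x z) \<le> max (max (d1 x y) (d2 x y)) (max (d1 y z) (d2 y z))"
    by (auto simp: le_max_iff_disj)
qed (use assms in \<open>auto simp: ultrametric_on_def\<close>)

lemma ultrametric_top_pairs_match:
  assumes "ultrametric_on S d" "equilateral_free_on S d"
    and "\<forall>x\<in>S. \<forall>y\<in>S. d x y \<le> c" "0 < c"
    and "a \<in> S" "b \<in> S" "x \<in> S" "y \<in> S" "d a b = c" "d x y = c"
  shows "d a x < c \<and> d b y < c \<or> d a y < c \<and> d b x < c"
proof -
  have distinct: "u \<noteq> v" if "u \<in> S" "d u v = c" for u v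
    using that assms(1,4) unfolding ultrametric_on_def by auto
  have near: "d a z < c \<or> d b z < c" if "z \<in> S" for z
  proof (rule ccontr)
    assume "\<not> ?thesis"
    then have "d a z = c" "d b z = c" using assms(3,5,6) that by force+
    then show False
      using assms(2,5,6,9) that distinct unfolding equilateral_free_on_def by metis
  qed
  have apart: "\<not> (d u x < c \<and> d u y < c)" if "u \<in> S" for u
    using assms(1,7,8,10) that unfolding ultrametric_on_def by (metis max_less_iff_conj not_le)
  show ?thesis using near[OF assms(7)] near[OF assms(8)] apart assms(5,6) by blast
qed

lemma ultrametric_max_top_pairs:
  assumes "ultrametric_on S d1" "ultrametric_on S d2"
    and "equilateral_free_on S (\<lambda>x y. max (d1 x y) (d2 x y))"
    and "\<forall>x\<in>S. \<forall>y\<in>S. max (d1 x y) (d2 x y) \<le> c" "0 < c"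
  shows "(\<forall>x\<in>S. \<forall>y\<in>S. max (d1 x y) (d2 x y) = c \<longrightarrow> d1 x y = c) \<or>
         (\<forall>x\<in>S. \<forall>y\<in>S. max (d1 x y) (d2 x y) = c \<longrightarrow> d2 x y = c)"
proof (cases "\<forall>x\<in>S. \<forall>y\<in>S. max (d1 x y) (d2 x y) = c \<longrightarrow> d1 x y = c")
  case False
  let ?d = "\<lambda>x y. max (d1 x y) (d2 x y)"
  from False obtain a b where ab: "a \<in> S" "b \<in> S" "?d a b = c" "d1 a b < c"
    using assms(4) by force
  have tri: "d1 u w \<le> max (d1 u v) (d1 v w)" if "u \<in> S" "v \<in> S" "w \<in> S" for u v w
    using assms(1) that unfolding ultrametric_on_def by blast
  have sym: "d1 u v = d1 v u" if "u \<in> S" "v \<in> S" for u v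
    using assms(1) that unfolding ultrametric_on_def by blast
  have d1_below: "d1 x y < c" if "x \<in> S" "y \<in> S" "?d a x < c" "?d b y < c" for x y
  proof -
    have "d1 a y < c" using order_le_less_trans[OF tri[OF ab(1,2) that(2)]] ab(4) that(4) by simp
    moreover have "d1 x a < c" using sym[OF that(1) ab(1)] that(3) by simp
    ultimately show ?thesis using order_le_less_trans[OF tri[OF that(1) ab(1) that(2)]] by simp
  qed
  have "\<forall>x\<in>S. \<forall>y\<in>S. ?d x y = c \<longrightarrow> d2 x y = c"
  proof (intro ballI impI)
    fix x y assume xy: "x \<in> S" "y \<in> S" "?d x y = c"
    have "?d a x < c \<and> ?d b y < c \<or> ?d a y < c \<and> ?d b x < c"
      by (rule ultrametric_top_pairs_match[OF ultrametric_on_max[OF assms(1,2)] assms(3-5) ab(1,2) xy(1,2) ab(3) xy(3)])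
    then have "d1 x y < c" using d1_below[OF xy(1,2)] d1_below[OF xy(2,1)] sym[OF xy(1,2)] by auto
    then show "d2 x y = c" using xy(3) by (simp add: max_def split: if_splits)
  qed
  then show ?thesis ..
qed simp

section \<open>Clades of a tree topology\<close>

lemma tree_topology_finite: "tree_topology N F \<Longrightarrow> finite F"
  unfolding tree_topology_def using finite_subset[of F "Pow {1..N}"] by auto

lemma tree_topology_clade_subset: "tree_topology N F \<Longrightarrow> S \<in> insert {1..N} F \<Longrightarrow> S \<subseteq> {1..N}"
  unfolding tree_topology_def by auto

lemma tree_topology_laminar: "tree_topology N F \<Longrightarrow> laminar (insert {1..N} F)"
  unfolding laminar_insert_iff by (auto simp: tree_topology_def laminar_def)

lemma subset_cl: "q \<subseteq> {1..N} \<Longrightarrow> q \<subseteq> cl N F q"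
  unfolding cl_def by auto

lemma cl_least:
  assumes "tree_topology N F" "T \<in> insert {1..N} F" "q \<subseteq> T"
  shows "cl N F q \<subseteq> T"
proof (cases "\<exists>S\<in>F. q \<subseteq> S")
  case True
  then obtain S where S: "S \<in> F" "q \<subseteq> S" by blast
  have below: "cl N F q \<subseteq> R" if "R \<in> F" "q \<subseteq> R" for R
    using that unfolding cl_def by auto
  show ?thesis
    using assms(2,3) below[OF S] tree_topology_clade_subset[OF assms(1), of S] S(1) below by blast
next
  case False
  then show ?thesis using assms(2,3) unfolding cl_def by auto
qed

lemma cl_in_clades:
  assumes "tree_topology N F" "q \<subseteq> {1..N}" "q \<noteq> {}"
  shows "cl N F q \<in> insert {1..N} F"
proof (cases "\<exists>S\<in>F. q \<subseteq> S")
  case True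
  define A where "A = {S\<in>F. q \<subseteq> S}"
  have "laminar A"
    using laminar_subset[OF tree_topology_laminar[OF assms(1)], of A] unfolding A_def by blast
  have "finite A" "A \<noteq> {}"
    using tree_topology_finite[OF assms(1)] True unfolding A_def by auto
  then obtain M where M: "M \<in> A" "\<forall>R\<in>A. R \<subseteq> M \<longrightarrow> M = R"
    using finite_has_minimal by blast
  have "M \<subseteq> R" if "R \<in> A" for R
  proof -
    have "q \<subseteq> M \<inter> R" using M(1) that unfolding A_def by blast
    then have "M \<subseteq> R \<or> R \<subseteq> M"
      using laminar_comparable[OF \<open>laminar A\<close> M(1) that] assms(3) by blast
    then show ?thesis using M(2) that by blast
  qed
  then have "\<Inter>A = M" using M(1) by blast
  then have "cl N F q = M" using True unfolding cl_def A_def by simp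
  then show ?thesis using M(1) unfolding A_def by simp
qed (simp add: cl_def)

lemma full_dimensional_no_trifurcation:
  assumes "tree_topology N F" "full_dimensional N F"
    and "i \<in> {1..N}" "j \<in> {1..N}" "k \<in> {1..N}" "i \<noteq> j" "i \<noteq> k" "j \<noteq> k"
    and "cl N F {i, j} = cl N F {i, k}" "cl N F {i, j} = cl N F {j, k}"
  shows False
proof -
  let ?G = "insert {1..N} F" and ?S = "cl N F {i, j}"
  have "2 \<le> N" using assms(3,4,6) by auto
  have members: "\<forall>R\<in>?G. R \<subseteq> {1..N} \<and> 2 \<le> card R"
    using assms(1) \<open>2 \<le> N\<close> unfolding tree_topology_def by auto
  have S: "?S \<in> ?G" using cl_in_clades[OF assms(1)] assms(3,4) by simp
  have ijk: "i \<in> ?S" "j \<in> ?S" "k \<in> ?S"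
    using subset_cl[of "{i, j}" N F] subset_cl[of "{i, k}" N F] assms(3-5,9) by auto
  have branches: "\<forall>R\<in>?G. i \<in> R \<and> j \<in> R \<or> i \<in> R \<and> k \<in> R \<or> j \<in> R \<and> k \<in> R \<longrightarrow> ?S \<subseteq> R"
  proof (intro ballI impI)
    fix R assume "R \<in> ?G" "i \<in> R \<and> j \<in> R \<or> i \<in> R \<and> k \<in> R \<or> j \<in> R \<and> k \<in> R"
    then show "?S \<subseteq> R"
      using cl_least[OF assms(1), of R "{i, j}"] cl_least[OF assms(1), of R "{i, k}"]
        cl_least[OF assms(1), of R "{j, k}"] assms(9,10) by auto
  qed
  have "card ?G \<le> card {1..N} - 2"
    using card_laminar_three_branches[OF _ tree_topology_laminar[OF assms(1)] members S ijk
        assms(6-8) branches] by simp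
  moreover have "{1..N} \<notin> F" using assms(1) \<open>2 \<le> N\<close> unfolding tree_topology_def by force
  ultimately show False
    using assms(2) tree_topology_finite[OF assms(1)] \<open>2 \<le> N\<close> unfolding full_dimensional_def by simp
qed

lemma pair_in_pairs: "i \<in> {1..N} \<Longrightarrow> j \<in> {1..N} \<Longrightarrow> i \<noteq> j \<Longrightarrow> {i, j} \<in> pairs N"
  unfolding pairs_def by auto

lemma pairsE:
  assumes "q \<in> pairs N"
  obtains i j where "q = {i, j}" "i \<noteq> j" "i \<in> {1..N}" "j \<in> {1..N}"
  using assms unfolding pairs_def by (auto simp: card_2_iff)

lemma singleton_notin_pairs: "{i} \<notin> pairs N"
  unfolding pairs_def by simp

lemma cl_of_pair_in_clades: "tree_topology N F \<Longrightarrow> q \<in> pairs N \<Longrightarrow> cl N F q \<in> insert {1..N} F"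
  by (rule cl_in_clades) (auto simp: pairs_def)

section \<open>Tree metrics\<close>

definition height_function :: "nat \<Rightarrow> nat set set \<Rightarrow> (nat set \<Rightarrow> real) \<Rightarrow> bool" where
  "height_function N F h \<longleftrightarrow> (\<forall>S\<in>insert {1..N} F. 0 < h S) \<and>
     (\<forall>S\<in>insert {1..N} F. \<forall>T\<in>insert {1..N} F. S \<subset> T \<longrightarrow> h S < h T)"

lemma utE:
  assumes "w \<in> ut N F"
  obtains h where "height_function N F h"
    and "w = (\<lambda>p. if p \<in> pairs N then 2 * h (cl N F p) else 0)"
  using assms unfolding ut_def height_function_def by blast

lemma ut_outside_pairs: "w \<in> ut N F \<Longrightarrow> q \<notin> pairs N \<Longrightarrow> w q = 0"
  by (auto elim: utE)

lemma ut_pos: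
  assumes "tree_topology N F" "w \<in> ut N F" "q \<in> pairs N"
  shows "0 < w q"
proof -
  obtain h where "height_function N F h" "w = (\<lambda>p. if p \<in> pairs N then 2 * h (cl N F p) else 0)"
    using utE[OF assms(2)] .
  then show ?thesis
    using cl_of_pair_in_clades[OF assms(1,3)] assms(3) unfolding height_function_def by auto
qed

lemma ut_nonneg: "tree_topology N F \<Longrightarrow> w \<in> ut N F \<Longrightarrow> 0 \<le> w q"
  using ut_pos[of N F w q] ut_outside_pairs[of w N F q] by (cases "q \<in> pairs N") auto

lemma ut_le_of_subset_cl:
  assumes "tree_topology N F" "w \<in> ut N F" "p \<in> pairs N" "q \<subseteq> cl N F p"
  shows "w q \<le> w p"
proof -
  obtain h where h: "height_function N F h"
    and w: "w = (\<lambda>p. if p \<in> pairs N then 2 * h (cl N F p) else 0)"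
    using utE[OF assms(2)] .
  show ?thesis
  proof (cases "q \<in> pairs N")
    case True
    have clades: "cl N F q \<in> insert {1..N} F" "cl N F p \<in> insert {1..N} F"
      using cl_of_pair_in_clades assms(1,3) True by blast+
    moreover have "cl N F q \<subseteq> cl N F p"
      using cl_least[OF assms(1) clades(2) assms(4)] .
    ultimately have "h (cl N F q) \<le> h (cl N F p)"
      using h unfolding height_function_def by (metis order_le_less order_less_imp_le)
    then show ?thesis using True assms(3) w by simp
  next
    case False
    then show ?thesis using ut_nonneg[OF assms(1,2), of p] w by simp
  qed
qed

lemma ut_cl_eq:
  assumes "tree_topology N F" "w \<in> ut N F" "q \<in> pairs N" "q' \<in> pairs N"
    and "q \<inter> q' \<noteq> {}" "w q = w q'"
  shows "cl N F q = cl N F q'"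
proof (rule ccontr)
  assume ne: "cl N F q \<noteq> cl N F q'"
  obtain h where h: "height_function N F h"
    and w: "w = (\<lambda>p. if p \<in> pairs N then 2 * h (cl N F p) else 0)"
    using utE[OF assms(2)] .
  have clades: "cl N F q \<in> insert {1..N} F" "cl N F q' \<in> insert {1..N} F"
    using cl_of_pair_in_clades assms(1,3,4) by blast+
  have "q \<subseteq> cl N F q" "q' \<subseteq> cl N F q'"
    using subset_cl assms(3,4) unfolding pairs_def by blast+
  then have "cl N F q \<inter> cl N F q' \<noteq> {}" using assms(5) by blast
  then have "cl N F q \<subset> cl N F q' \<or> cl N F q' \<subset> cl N F q"
    using laminar_comparable[OF tree_topology_laminar[OF assms(1)] clades] ne by blast
  then have "h (cl N F q) \<noteq> h (cl N F q')"
    using clades h unfolding height_function_def by (metis less_irrefl)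
  then show False using assms(3,4,6) w by simp
qed

lemma ut_ultrametric:
  assumes "tree_topology N F" "w \<in> ut N F"
  shows "ultrametric_on {1..N} (\<lambda>i j. w {i, j})"
  unfolding ultrametric_on_def
proof (intro conjI ballI)
  show "w {i, i} = 0" for i
    using ut_outside_pairs[OF assms(2) singleton_notin_pairs] by simp
  show "w {i, j} = w {j, i}" for i j
    by (simp add: insert_commute)
  fix i j k assume ijk: "i \<in> {1..N}" "j \<in> {1..N}" "k \<in> {1..N}"
  consider "i = k" | "j = i \<or> j = k" | "i \<noteq> k" "j \<noteq> i" "j \<noteq> k" by blast
  then show "w {i, k} \<le> max (w {i, j}) (w {j, k})"
  proof cases
    case 1
    then show ?thesis
      using ut_outside_pairs[OF assms(2) singleton_notin_pairs] ut_nonneg[OF assms]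
      by (simp add: le_max_iff_disj)
  next
    case 2
    then show ?thesis by (auto simp: insert_commute)
  next
    case 3
    then have pairs: "{i, j} \<in> pairs N" "{j, k} \<in> pairs N"
      using ijk pair_in_pairs by auto
    have sub: "{i, j} \<subseteq> cl N F {i, j}" "{j, k} \<subseteq> cl N F {j, k}"
      using subset_cl[of "{i, j}" N F] subset_cl[of "{j, k}" N F] ijk by auto
    have "cl N F {i, j} \<inter> cl N F {j, k} \<noteq> {}" using sub by blast
    then have "cl N F {i, j} \<subseteq> cl N F {j, k} \<or> cl N F {j, k} \<subseteq> cl N F {i, j}"
      using laminar_comparable[OF tree_topology_laminar[OF assms(1)]
          cl_of_pair_in_clades[OF assms(1) pairs(1)] cl_of_pair_in_clades[OF assms(1) pairs(2)]]
      by blast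
    then have "{i, k} \<subseteq> cl N F {j, k} \<or> {i, k} \<subseteq> cl N F {i, j}" using sub by blast
    then have "w {i, k} \<le> w {j, k} \<or> w {i, k} \<le> w {i, j}"
      using ut_le_of_subset_cl[OF assms pairs(2)] ut_le_of_subset_cl[OF assms pairs(1)] by blast
    then show ?thesis by (auto simp: le_max_iff_disj)
  qed
qed

lemma ut_equilateral_free:
  assumes "tree_topology N F" "full_dimensional N F" "w \<in> ut N F"
  shows "equilateral_free_on {1..N} (\<lambda>i j. w {i, j})"
  unfolding equilateral_free_on_def
proof (intro ballI impI notI)
  fix i j k assume ijk: "i \<in> {1..N}" "j \<in> {1..N}" "k \<in> {1..N}" "i \<noteq> j" "i \<noteq> k" "j \<noteq> k"
    and eq: "w {i, j} = w {i, k} \<and> w {i, j} = w {j, k}"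
  have "cl N F {i, j} = cl N F {i, k}" "cl N F {i, j} = cl N F {j, k}"
    using ut_cl_eq[OF assms(1,3)] pair_in_pairs ijk eq by auto
  then show False using full_dimensional_no_trifurcation[OF assms(1,2) ijk] by blast
qed

lemma eq_class_subset_if_top_pairs_preserved:
  assumes "tree_topology N F" "tree_topology N F'" "w \<in> ut N F" "w' \<in> ut N F'" "p \<in> pairs N"
    and top: "\<forall>x\<in>cl N F p. \<forall>y\<in>cl N F p. w {x, y} = w p \<longrightarrow> w' {x, y} = w p"
  shows "eq_class N F p \<subseteq> eq_class N F' p"
proof
  fix q assume "q \<in> eq_class N F p"
  then have q: "q \<in> pairs N" "cl N F q = cl N F p" unfolding eq_class_def by auto
  obtain a b where ab: "p = {a, b}" "a \<noteq> b" "a \<in> {1..N}" "b \<in> {1..N}" using pairsE[OF assms(5)] .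
  obtain x y where xy: "q = {x, y}" "x \<noteq> y" "x \<in> {1..N}" "y \<in> {1..N}" using pairsE[OF q(1)] .
  have in_cl: "a \<in> cl N F p" "b \<in> cl N F p" "x \<in> cl N F p" "y \<in> cl N F p"
    using subset_cl[of p N F] subset_cl[of q N F] q(2) ab xy by auto
  obtain h where "w = (\<lambda>p. if p \<in> pairs N then 2 * h (cl N F p) else 0)"
    using utE[OF assms(3)] by blast
  then have "w q = w p" using q assms(5) by simp
  have "w {x, y} \<le> max (w {x, a}) (w {a, y})"
    using ut_ultrametric[OF assms(1,3)] ab(3) xy(3,4) unfolding ultrametric_on_def by blast
  then have "w p \<le> max (w {a, x}) (w {a, y})"
    using \<open>w q = w p\<close> xy(1) by (simp add: insert_commute)
  moreover have "w {a, x} \<le> w p" "w {a, y} \<le> w p"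
    using ut_le_of_subset_cl[OF assms(1,3,5)] in_cl by auto
  ultimately have "w {a, x} = w p \<or> w {a, y} = w p"
    by (metis le_max_iff_disj order_antisym)
  then obtain z where z: "z \<in> q" "z \<in> cl N F p" "w {a, z} = w p"
    using xy(1) in_cl(3,4) by blast
  have "a \<noteq> z"
    using z(3) ut_pos[OF assms(1,3,5)] ut_outside_pairs[OF assms(3) singleton_notin_pairs] by auto
  then have az: "{a, z} \<in> pairs N" using z(1) xy ab(3) pair_in_pairs by auto
  have "w' p = w p" using top[rule_format, OF in_cl(1,2)] ab(1) by simp
  moreover have "w' {a, z} = w p" using top[rule_format, OF in_cl(1) z(2) z(3)] .
  moreover have "w' q = w p" using top[rule_format, OF in_cl(3,4)] xy(1) \<open>w q = w p\<close> by simp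
  ultimately have "cl N F' p = cl N F' {a, z}" "cl N F' {a, z} = cl N F' q"
    using ut_cl_eq[OF assms(2,4,5) az] ut_cl_eq[OF assms(2,4) az q(1)] ab(1) z(1) by auto
  then show "q \<in> eq_class N F' p" using q(1) unfolding eq_class_def by simp
qed

theorem mainTheorem17:
  fixes N :: nat and F1 F2 F :: "nat set set" and p :: "nat set"
  assumes "tree_topology N F1" and "full_dimensional N F1"
    and "tree_topology N F2" and "full_dimensional N F2"
    and "tree_topology N F" and "full_dimensional N F"
    and "F \<in> Cset N F1 F2"
    and "p \<in> pairs N"
  shows "(\<exists>q\<in>pairs N. eq_class N F p \<subseteq> eq_class N F1 q) \<or>
         (\<exists>q\<in>pairs N. eq_class N F p \<subseteq> eq_class N F2 q)"
proof -
  obtain w1 w2 where w1: "w1 \<in> ut N F1" and w2: "w2 \<in> ut N F2"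
    and w: "tropical_sum w1 w2 \<in> ut N F"
    using assms(7) unfolding Cset_def by blast
  let ?S = "cl N F p" and ?w = "tropical_sum w1 w2"
  have sum: "?w q = max (w1 q) (w2 q)" for q unfolding tropical_sum_def ..
  have S: "?S \<subseteq> {1..N}"
    using tree_topology_clade_subset[OF assms(5) cl_of_pair_in_clades[OF assms(5,8)]] .
  have "ultrametric_on ?S (\<lambda>x y. w1 {x, y})" "ultrametric_on ?S (\<lambda>x y. w2 {x, y})"
    using ultrametric_on_subset[OF ut_ultrametric[OF assms(1) w1] S]
      ultrametric_on_subset[OF ut_ultrametric[OF assms(3) w2] S] .
  moreover have "equilateral_free_on ?S (\<lambda>x y. max (w1 {x, y}) (w2 {x, y}))"
    using equilateral_free_on_subset[OF ut_equilateral_free[OF assms(5,6) w] S] unfolding sum .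
  moreover have "\<forall>x\<in>?S. \<forall>y\<in>?S. max (w1 {x, y}) (w2 {x, y}) \<le> ?w p"
    using ut_le_of_subset_cl[OF assms(5) w assms(8)] unfolding sum by simp
  moreover have "0 < ?w p" using ut_pos[OF assms(5) w assms(8)] .
  ultimately have "(\<forall>x\<in>?S. \<forall>y\<in>?S. ?w {x, y} = ?w p \<longrightarrow> w1 {x, y} = ?w p) \<or>
      (\<forall>x\<in>?S. \<forall>y\<in>?S. ?w {x, y} = ?w p \<longrightarrow> w2 {x, y} = ?w p)"
    unfolding sum[of "{_, _}"] by (rule ultrametric_max_top_pairs)
  then have "eq_class N F p \<subseteq> eq_class N F1 p \<or> eq_class N F p \<subseteq> eq_class N F2 p"
    using eq_class_subset_if_top_pairs_preserved[OF assms(5,1) w w1 assms(8)]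
      eq_class_subset_if_top_pairs_preserved[OF assms(5,3) w w2 assms(8)] by argo
  then show ?thesis using assms(8) by blast
qed

end
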